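(* Let $A_0(t)$ be an operator-valued function (on a finite-dimensional space) that is analytic in $t$ over the reals, and let $\alpha$ be a real scaling factor. Define $\alpha A_k(t)$ recursively by $$\alpha A_{k+1}(t)=\sum_{m=1}^\infty(-1)^m\frac{m}{(m+1)!}\,\mathrm{ad}^m_{\int_0^t\alpha A_k(s)ds}\big[\alpha A_k(t)\big].$$ If $\alpha A_k(t)=O(\alpha^qt^p)$, then $\alpha A_{k+1}(t)=O(\alpha^{2q}t^{2p+2})$.
   Context: $\mathrm{ad}_X(Y)=[X,Y]=XY-YX$ and $\mathrm{ad}_X^m(Y)=\mathrm{ad}_X(\mathrm{ad}_X^{m-1}(Y))$. The asymptotic notation refers to small $\alpha$ and $t$. *)

theory Defs
  imports "HOL-Analysis.Analysis"
begin

definition real_analytic :: "(real \<Rightarrow> 'a::real_normed_vector) \<Rightarrow> bool" where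
  "real_analytic f \<longleftrightarrow>
     (\<forall>t0. \<exists>r>0. \<exists>c::nat \<Rightarrow> 'a. \<forall>t. \<bar>t - t0\<bar> < r \<longrightarrow>
        (\<lambda>n. (t - t0) ^ n *\<^sub>R c n) sums f t)"

definition ad :: "'a::ring \<Rightarrow> 'a \<Rightarrow> 'a" where
  "ad X Y = X * Y - Y * X"

definition int0 :: "(real \<Rightarrow> 'a::real_normed_vector) \<Rightarrow> real \<Rightarrow> 'a" where
  "int0 f t = (if 0 \<le> t then integral {0..t} f else - integral {t..0} f)"

text \<open>One step of the recursion:
  sum over m >= 1 of (-1)^m m/(m+1)! ad^m_{int_0^t B}(B t); index shifted m = Suc j.\<close>
definition magnus_step :: "(real \<Rightarrow> 'a::{real_normed_algebra,banach}) \<Rightarrow> real \<Rightarrow> 'a" where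
  "magnus_step B t =
     (\<Sum>j. ((-1) ^ Suc j * real (Suc j) / fact (Suc j + 1)) *\<^sub>R ((ad (int0 B t) ^^ Suc j) (B t)))"

fun alphaA :: "(real \<Rightarrow> 'a::{real_normed_algebra,banach}) \<Rightarrow> real \<Rightarrow> nat \<Rightarrow> real \<Rightarrow> 'a" where
  "alphaA A0 \<alpha> 0 t = \<alpha> *\<^sub>R A0 t"
| "alphaA A0 \<alpha> (Suc k) t = magnus_step (alphaA A0 \<alpha> k) t"

definition bigO_at0 :: "(real \<Rightarrow> real \<Rightarrow> 'a::real_normed_vector) \<Rightarrow> nat \<Rightarrow> nat \<Rightarrow> bool" where
  "bigO_at0 f q p \<longleftrightarrow>
     (\<exists>C. \<forall>\<^sub>F x in nhds (0::real, 0::real). norm (f (fst x) (snd x)) \<le> C * \<bar>fst x\<bar> ^ q * \<bar>snd x\<bar> ^ p)"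

end

theory Submission
  imports Defs
begin

text \<open>
  Write \<open>\<alpha>A_k(t)\<close> as a double power series \<open>\<Sum> c_ij \<alpha>^i t^j\<close>, absolutely convergent on a square
  around the origin. For \<open>\<alpha>A_0(t)\<close> this is the analyticity of \<open>A_0\<close>, and the property survives
  products, commutators, integration in \<open>t\<close> and norm-convergent series, hence the recursion.
  If such a series is \<open>O(\<alpha>^q t^p)\<close>, all its coefficients with \<open>i < q\<close> or \<open>j < p\<close> vanish. Then
  \<open>B = \<alpha>A_k(t) = t^p D(\<alpha>) + O(\<alpha>^q t^(p+1))\<close> with \<open>D(\<alpha>) = O(\<alpha>^q)\<close>, and
  \<open>X = \<integral>_0^t B = t^(p+1)/(p+1) D(\<alpha>) + O(\<alpha>^q t^(p+2))\<close>. The leading parts of \<open>X\<close> and \<open>B\<close>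
  commute, so the term \<open>m = 1\<close> of the recursion, \<open>-[X, B]/2\<close>, is \<open>O(\<alpha>^(2q) t^(2p+2))\<close>;
  the terms with \<open>m \<ge> 2\<close> are \<open>O(\<parallel>X\<parallel>^2 \<parallel>B\<parallel>)\<close>, which is smaller still.
\<close>

lemma has_sum_fibrewise:
  fixes g :: "'i \<Rightarrow> 'a::{topological_comm_monoid_add,t3_space}" and e :: "'i \<Rightarrow> 'n"
  assumes "(g has_sum S) I" and "\<And>n. (g has_sum G n) {x\<in>I. e x = n}"
  shows "(G has_sum S) UNIV"
proof (rule has_sum_SigmaD)
  have "bij_betw (\<lambda>x. (e x, x)) I (Sigma UNIV (\<lambda>n. {x\<in>I. e x = n}))"
    by (rule bij_betwI[where g = snd]) auto
  then show "((\<lambda>(n, x). g x) has_sum S) (Sigma UNIV (\<lambda>n. {x\<in>I. e x = n}))"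
    using assms(1) by (simp add: has_sum_reindex_bij_betw[symmetric])
qed (use assms(2) in simp)

lemma has_sum_rows_imp_sums:
  fixes f :: "nat \<times> 'i \<Rightarrow> 'a::{topological_comm_monoid_add,t3_space}"
  assumes "(f has_sum S) UNIV" and "\<And>m. ((\<lambda>n. f (m, n)) has_sum g m) UNIV"
  shows "g sums S"
proof -
  have "(g has_sum S) UNIV"
    using assms by (intro has_sum_SigmaD[where A = UNIV and B = "\<lambda>_. UNIV", of f]) simp_all
  then show ?thesis
    by (rule has_sum_imp_sums)
qed

lemma has_sum_mult_abs:
  fixes f g :: "_ \<Rightarrow> 'a::{real_normed_algebra,banach}"
  assumes "(f has_sum A) I" "(g has_sum B) J"
    and "(\<lambda>x. norm (f x)) summable_on I" "(\<lambda>y. norm (g y)) summable_on J"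
  shows "((\<lambda>(x, y). f x * g y) has_sum A * B) (I \<times> J)"
    and "(\<lambda>(x, y). norm (f x * g y)) summable_on (I \<times> J)"
proof -
  have "(\<lambda>(x, y). norm (f x) * norm (g y)) summable_on (I \<times> J)"
    by (rule summable_on_SigmaI[where g = "\<lambda>x. norm (f x) * (\<Sum>\<^sub>\<infinity>y\<in>J. norm (g y))"])
       (use assms(3,4) in \<open>auto intro: has_sum_cmult_right summable_on_cmult_left\<close>)
  then show abs: "(\<lambda>(x, y). norm (f x * g y)) summable_on (I \<times> J)"
    by (rule summable_on_comparison_test) (auto intro: norm_mult_ineq)
  show "((\<lambda>(x, y). f x * g y) has_sum A * B) (I \<times> J)"
    by (rule has_sum_SigmaI[where g = "\<lambda>x. f x * B"])
       (use assms(1,2) abs in \<open>auto intro: has_sum_cmult_right has_sum_cmult_left abs_summable_summable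
          simp: case_prod_unfold\<close>)
qed

section \<open>Absolutely convergent double power series\<close>

definition has_double_series ::
    "real \<Rightarrow> (nat \<times> nat \<Rightarrow> 'a::real_normed_vector) \<Rightarrow> (real \<Rightarrow> real \<Rightarrow> 'a) \<Rightarrow> bool" where
  "has_double_series r c F \<longleftrightarrow> 0 < r \<and>
     (\<lambda>n. norm (c n) * r ^ (fst n + snd n)) summable_on UNIV \<and>
     (\<forall>a t. \<bar>a\<bar> \<le> r \<longrightarrow> \<bar>t\<bar> \<le> r \<longrightarrow>
        ((\<lambda>n. (a ^ fst n * t ^ snd n) *\<^sub>R c n) has_sum F a t) UNIV)"

definition double_series_norm :: "real \<Rightarrow> (nat \<times> nat \<Rightarrow> 'a::real_normed_vector) \<Rightarrow> real" where
  "double_series_norm r c = (\<Sum>\<^sub>\<infinity>n. norm (c n) * r ^ (fst n + snd n))"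

definition double_series_bound :: "real \<Rightarrow> real \<Rightarrow> (real \<Rightarrow> real \<Rightarrow> 'a::real_normed_vector) \<Rightarrow> bool" where
  "double_series_bound r M F \<longleftrightarrow> (\<exists>c. has_double_series r c F \<and> double_series_norm r c \<le> M)"

lemma has_double_series_pos: "has_double_series r c F \<Longrightarrow> 0 < r"
  by (simp add: has_double_series_def)

lemma has_double_series_majorant:
  "has_double_series r c F \<Longrightarrow>
     ((\<lambda>n. norm (c n) * r ^ (fst n + snd n)) has_sum double_series_norm r c) UNIV"
  by (simp add: has_double_series_def double_series_norm_def)

lemma has_double_series_has_sum:
  "has_double_series r c F \<Longrightarrow> \<bar>a\<bar> \<le> r \<Longrightarrow> \<bar>t\<bar> \<le> r \<Longrightarrow>
     ((\<lambda>n. (a ^ fst n * t ^ snd n) *\<^sub>R c n) has_sum F a t) UNIV"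
  by (simp add: has_double_series_def)

lemma double_series_norm_nonneg: "has_double_series r c F \<Longrightarrow> 0 \<le> double_series_norm r c"
  unfolding double_series_norm_def by (intro infsum_nonneg) (simp add: has_double_series_def)

lemma double_series_bound_nonneg: "double_series_bound r M F \<Longrightarrow> 0 \<le> M"
  unfolding double_series_bound_def using double_series_norm_nonneg by fastforce

lemma norm_monomial_scaleR_le:
  fixes y :: "'a::real_normed_vector"
  assumes "\<bar>a\<bar> \<le> r" "\<bar>t\<bar> \<le> r"
  shows "norm ((a ^ i * t ^ j) *\<^sub>R y) \<le> norm y * r ^ (i + j)"
proof -
  have "\<bar>a\<bar> ^ i * \<bar>t\<bar> ^ j \<le> r ^ i * r ^ j"
    using assms by (intro mult_mono power_mono) auto
  then show ?thesis
    by (simp add: abs_mult power_abs power_add mult.commute mult_left_mono)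
qed

lemma has_double_series_abs_summable:
  assumes "has_double_series r c F" "\<bar>a\<bar> \<le> r" "\<bar>t\<bar> \<le> r"
  shows "(\<lambda>n. norm ((a ^ fst n * t ^ snd n) *\<^sub>R c n)) summable_on UNIV"
proof (rule Infinite_Sum.abs_summable_on_comparison_test')
  show "(\<lambda>n. norm (c n) * r ^ (fst n + snd n)) summable_on UNIV"
    using assms(1) by (simp add: has_double_series_def)
qed (rule norm_monomial_scaleR_le[OF assms(2,3)])

lemma abs_summable_on_fibre:
  fixes c :: "'i \<Rightarrow> 'a::real_normed_vector" and e :: "'i \<Rightarrow> nat \<times> nat"
  assumes "0 < r" and "(\<lambda>x. norm (c x) * r ^ (fst (e x) + snd (e x))) summable_on I"
  shows "(\<lambda>x. norm (c x)) summable_on {x\<in>I. e x = n}"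
proof -
  have "(\<lambda>x. norm (c x) * r ^ (fst (e x) + snd (e x))) summable_on {x\<in>I. e x = n}"
    by (rule summable_on_subset_banach[OF assms(2)]) auto
  then have "(\<lambda>x. norm (c x) * r ^ (fst n + snd n)) summable_on {x\<in>I. e x = n}"
    by (rule summable_on_cong[THEN iffD1, rotated]) simp
  then show ?thesis
    using summable_on_cmult_left'[of "r ^ (fst n + snd n)" "\<lambda>x. norm (c x)"] assms(1) by simp
qed

text \<open>Products, primitives and series of double power series are first obtained as sums over
  other index sets; this lemma brings them back to the canonical indexing by exponents.\<close>
lemma has_double_series_regroup:
  fixes c :: "'i \<Rightarrow> 'a::banach" and e :: "'i \<Rightarrow> nat \<times> nat"
  assumes r: "0 < r"
    and maj: "(\<lambda>x. norm (c x) * r ^ (fst (e x) + snd (e x))) summable_on I"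
    and sums: "\<And>a t. \<bar>a\<bar> \<le> r \<Longrightarrow> \<bar>t\<bar> \<le> r \<Longrightarrow>
      ((\<lambda>x. (a ^ fst (e x) * t ^ snd (e x)) *\<^sub>R c x) has_sum F a t) I"
  shows "has_double_series r (\<lambda>n. \<Sum>\<^sub>\<infinity>x\<in>{x\<in>I. e x = n}. c x) F"
    and "double_series_norm r (\<lambda>n. \<Sum>\<^sub>\<infinity>x\<in>{x\<in>I. e x = n}. c x)
           \<le> (\<Sum>\<^sub>\<infinity>x\<in>I. norm (c x) * r ^ (fst (e x) + snd (e x)))"
proof -
  define C where "C n = (\<Sum>\<^sub>\<infinity>x\<in>{x\<in>I. e x = n}. c x)" for n
  define N where "N n = (\<Sum>\<^sub>\<infinity>x\<in>{x\<in>I. e x = n}. norm (c x))" for n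
  define w where "w n = r ^ (fst n + snd n)" for n
  have w: "0 < w n" for n using r by (simp add: w_def)
  note fibre_abs = abs_summable_on_fibre[OF r maj]
  have fibre_maj: "((\<lambda>x. norm (c x) * r ^ (fst (e x) + snd (e x))) has_sum N n * w n) {x\<in>I. e x = n}" for n
  proof -
    have "((\<lambda>x. norm (c x) * w n) has_sum N n * w n) {x\<in>I. e x = n}"
      unfolding N_def by (rule has_sum_cmult_left) (rule has_sum_infsum[OF fibre_abs])
    then show ?thesis
      by (rule has_sum_cong[THEN iffD1, rotated]) (simp add: w_def)
  qed
  have N_maj: "((\<lambda>n. N n * w n) has_sum (\<Sum>\<^sub>\<infinity>x\<in>I. norm (c x) * r ^ (fst (e x) + snd (e x)))) UNIV"
    by (rule has_sum_fibrewise[OF has_sum_infsum[OF maj] fibre_maj])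
  have norm_C: "norm (C n) * w n \<le> N n * w n" for n
    unfolding C_def N_def by (intro mult_right_mono norm_infsum_bound fibre_abs less_imp_le[OF w])
  have C_maj: "(\<lambda>n. norm (C n) * w n) summable_on UNIV"
    by (rule summable_on_comparison_test[OF has_sum_imp_summable[OF N_maj] norm_C])
       (simp add: less_imp_le[OF w])
  have "(\<Sum>\<^sub>\<infinity>n. norm (C n) * w n) \<le> (\<Sum>\<^sub>\<infinity>n. N n * w n)"
    by (rule infsum_mono[OF C_maj has_sum_imp_summable[OF N_maj] norm_C])
  then show "double_series_norm r C \<le> (\<Sum>\<^sub>\<infinity>x\<in>I. norm (c x) * r ^ (fst (e x) + snd (e x)))"
    using infsumI[OF N_maj] by (simp add: double_series_norm_def w_def)
  have "((\<lambda>n. (a ^ fst n * t ^ snd n) *\<^sub>R C n) has_sum F a t) UNIV"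
    if "\<bar>a\<bar> \<le> r" "\<bar>t\<bar> \<le> r" for a t
  proof (rule has_sum_fibrewise[OF sums[OF that]])
    fix n
    have "(c has_sum C n) {x\<in>I. e x = n}"
      unfolding C_def using abs_summable_summable[OF fibre_abs] by simp
    then show "((\<lambda>x. (a ^ fst (e x) * t ^ snd (e x)) *\<^sub>R c x) has_sum (a ^ fst n * t ^ snd n) *\<^sub>R C n)
                 {x\<in>I. e x = n}"
      by (rule has_sum_cong[THEN iffD1, rotated, OF has_sum_scaleR]) simp
  qed
  with r C_maj show "has_double_series r C F"
    by (simp add: has_double_series_def w_def)
qed

section \<open>Closure under the operations of the recursion\<close>

lemma has_double_series_mult:
  fixes c d :: "nat \<times> nat \<Rightarrow> 'a::{real_normed_algebra,banach}"
  assumes c: "has_double_series r c F" and d: "has_double_series r d G"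
  shows "double_series_bound r (double_series_norm r c * double_series_norm r d) (\<lambda>a t. F a t * G a t)"
proof -
  have r: "0 < r" using c by (rule has_double_series_pos)
  define cd where "cd z = c (fst z) * d (snd z)" for z :: "(nat \<times> nat) \<times> (nat \<times> nat)"
  define e where "e z = (fst (fst z) + fst (snd z), snd (fst z) + snd (snd z))"
    for z :: "(nat \<times> nat) \<times> (nat \<times> nat)"
  have "((\<lambda>(x, y). (norm (c x) * r ^ (fst x + snd x)) * (norm (d y) * r ^ (fst y + snd y)))
      has_sum double_series_norm r c * double_series_norm r d) (UNIV \<times> UNIV)"
    using c d r
    by (intro has_sum_mult_abs(1)[OF has_double_series_majorant[OF c] has_double_series_majorant[OF d]])
       (simp_all add: has_double_series_def abs_mult power_abs abs_of_pos)
  then have maj: "((\<lambda>(x, y). (norm (c x) * r ^ (fst x + snd x)) * (norm (d y) * r ^ (fst y + snd y)))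
      has_sum double_series_norm r c * double_series_norm r d) UNIV"
    by simp
  have le: "norm (cd z) * r ^ (fst (e z) + snd (e z))
      \<le> (\<lambda>(x, y). (norm (c x) * r ^ (fst x + snd x)) * (norm (d y) * r ^ (fst y + snd y))) z" for z
  proof -
    have "norm (cd z) * r ^ (fst (e z) + snd (e z))
        \<le> norm (c (fst z)) * norm (d (snd z)) * r ^ (fst (e z) + snd (e z))"
      unfolding cd_def using r by (intro mult_right_mono norm_mult_ineq) simp
    then show ?thesis
      by (simp add: e_def case_prod_unfold power_add mult_ac)
  qed
  have maj_cd: "(\<lambda>z. norm (cd z) * r ^ (fst (e z) + snd (e z))) summable_on UNIV"
    using r by (intro summable_on_comparison_test[OF has_sum_imp_summable[OF maj] le]) auto
  have sums: "((\<lambda>z. (a ^ fst (e z) * t ^ snd (e z)) *\<^sub>R cd z) has_sum F a t * G a t) UNIV"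
    if "\<bar>a\<bar> \<le> r" "\<bar>t\<bar> \<le> r" for a t
  proof -
    have "((\<lambda>(x, y). ((a ^ fst x * t ^ snd x) *\<^sub>R c x) * ((a ^ fst y * t ^ snd y) *\<^sub>R d y))
        has_sum F a t * G a t) (UNIV \<times> UNIV)"
      by (rule has_sum_mult_abs(1)[OF has_double_series_has_sum[OF c that] has_double_series_has_sum[OF d that]
          has_double_series_abs_summable[OF c that] has_double_series_abs_summable[OF d that]])
    then show ?thesis
      by (simp add: cd_def e_def case_prod_unfold power_add mult_ac)
  qed
  have "(\<Sum>\<^sub>\<infinity>z. norm (cd z) * r ^ (fst (e z) + snd (e z)))
      \<le> double_series_norm r c * double_series_norm r d"
    using infsum_mono[OF maj_cd has_sum_imp_summable[OF maj] le] infsumI[OF maj] by simp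
  then show ?thesis
    unfolding double_series_bound_def
    using has_double_series_regroup[OF r maj_cd sums] by (auto intro: order_trans)
qed

lemma double_series_bound_mult:
  fixes F G :: "real \<Rightarrow> real \<Rightarrow> 'a::{real_normed_algebra,banach}"
  assumes "double_series_bound r M F" and "double_series_bound r N G"
  shows "double_series_bound r (M * N) (\<lambda>a t. F a t * G a t)"
proof -
  obtain c d where c: "has_double_series r c F" "double_series_norm r c \<le> M"
    and d: "has_double_series r d G" "double_series_norm r d \<le> N"
    using assms unfolding double_series_bound_def by blast
  have "double_series_norm r c * double_series_norm r d \<le> M * N"
    using c d double_series_norm_nonneg[OF c(1)] double_series_norm_nonneg[OF d(1)]
    by (intro mult_mono) auto
  with has_double_series_mult[OF c(1) d(1)] show ?thesis
    unfolding double_series_bound_def by (blast intro: order_trans)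
qed

lemma double_series_bound_diff:
  fixes F G :: "real \<Rightarrow> real \<Rightarrow> 'a::banach"
  assumes "double_series_bound r M F" and "double_series_bound r N G"
  shows "double_series_bound r (M + N) (\<lambda>a t. F a t - G a t)"
proof -
  obtain c d where c: "has_double_series r c F" "double_series_norm r c \<le> M"
    and d: "has_double_series r d G" "double_series_norm r d \<le> N"
    using assms unfolding double_series_bound_def by blast
  have r: "0 < r" using c(1) by (rule has_double_series_pos)
  have maj: "((\<lambda>n. norm (c n) * r ^ (fst n + snd n) + norm (d n) * r ^ (fst n + snd n))
      has_sum double_series_norm r c + double_series_norm r d) UNIV"
    by (rule has_sum_add[OF has_double_series_majorant[OF c(1)] has_double_series_majorant[OF d(1)]])
  have le: "norm (c n - d n) * r ^ (fst n + snd n)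
      \<le> norm (c n) * r ^ (fst n + snd n) + norm (d n) * r ^ (fst n + snd n)" for n
    using r by (simp add: mult_right_mono norm_triangle_ineq4 flip: distrib_right)
  have maj_diff: "(\<lambda>n. norm (c n - d n) * r ^ (fst n + snd n)) summable_on UNIV"
    using r by (intro summable_on_comparison_test[OF has_sum_imp_summable[OF maj] le]) auto
  have "((\<lambda>n. (a ^ fst n * t ^ snd n) *\<^sub>R (c n - d n)) has_sum F a t - G a t) UNIV"
    if "\<bar>a\<bar> \<le> r" "\<bar>t\<bar> \<le> r" for a t
  proof -
    have "((\<lambda>n. - ((a ^ fst n * t ^ snd n) *\<^sub>R d n)) has_sum - G a t) UNIV"
      using has_double_series_has_sum[OF d(1) that] by (simp add: has_sum_uminus)
    from has_sum_add[OF has_double_series_has_sum[OF c(1) that] this] show ?thesis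
      by (simp add: scaleR_diff_right)
  qed
  then have "has_double_series r (\<lambda>n. c n - d n) (\<lambda>a t. F a t - G a t)"
    using r maj_diff by (simp add: has_double_series_def)
  moreover have "double_series_norm r (\<lambda>n. c n - d n) \<le> M + N"
    using infsum_mono[OF maj_diff has_sum_imp_summable[OF maj] le] infsumI[OF maj] c(2) d(2)
    by (simp add: double_series_norm_def)
  ultimately show ?thesis
    unfolding double_series_bound_def by blast
qed

lemma double_series_bound_ad:
  fixes F G :: "real \<Rightarrow> real \<Rightarrow> 'a::{real_normed_algebra,banach}"
  assumes "double_series_bound r M F" and "double_series_bound r N G"
  shows "double_series_bound r (2 * M * N) (\<lambda>a t. ad (F a t) (G a t))"
  using double_series_bound_diff[OF double_series_bound_mult[OF assms]
      double_series_bound_mult[OF assms(2,1)]]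
  by (simp add: ad_def algebra_simps)

lemma double_series_bound_ad_power:
  fixes F G :: "real \<Rightarrow> real \<Rightarrow> 'a::{real_normed_algebra,banach}"
  assumes "double_series_bound r M F" and "double_series_bound r N G"
  shows "double_series_bound r ((2 * M) ^ m * N) (\<lambda>a t. (ad (F a t) ^^ m) (G a t))"
proof (induction m)
  case 0
  then show ?case using assms(2) by simp
next
  case (Suc m)
  from double_series_bound_ad[OF assms(1) Suc.IH] show ?case
    by (simp add: mult_ac)
qed

lemma has_double_series_suminf:
  fixes Z :: "nat \<Rightarrow> real \<Rightarrow> real \<Rightarrow> 'a::banach"
  assumes c: "\<And>m. has_double_series r (c m) (Z m)"
    and summ: "summable (\<lambda>m. \<bar>k m\<bar> * double_series_norm r (c m))"
  shows "double_series_bound r (\<Sum>m. \<bar>k m\<bar> * double_series_norm r (c m)) (\<lambda>a t. \<Sum>m. k m *\<^sub>R Z m a t)"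
proof -
  have r: "0 < r" using c[of 0] by (rule has_double_series_pos)
  define cs where "cs z = k (fst z) *\<^sub>R c (fst z) (snd z)" for z :: "nat \<times> (nat \<times> nat)"
  define ws where "ws z = norm (cs z) * r ^ (fst (snd z) + snd (snd z))" for z :: "nat \<times> (nat \<times> nat)"
  have rows: "((\<lambda>n. ws (m, n)) has_sum \<bar>k m\<bar> * double_series_norm r (c m)) UNIV" for m
    using has_sum_cmult_right[OF has_double_series_majorant[OF c], of "\<bar>k m\<bar>"]
    by (simp add: ws_def cs_def mult.assoc)
  have "ws summable_on Sigma UNIV (\<lambda>_. UNIV)"
    by (rule summable_on_SigmaI[OF rows summable_nonneg_imp_summable_on[OF summ]])
       (use r double_series_norm_nonneg[OF c] in \<open>simp_all add: ws_def\<close>)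
  then have ws_summable: "ws summable_on UNIV"
    by simp
  have ws_sum: "infsum ws UNIV = (\<Sum>m. \<bar>k m\<bar> * double_series_norm r (c m))"
    by (rule sums_unique[OF has_sum_rows_imp_sums[OF has_sum_infsum[OF ws_summable] rows]])
  have sums: "((\<lambda>z. (a ^ fst (snd z) * t ^ snd (snd z)) *\<^sub>R cs z) has_sum (\<Sum>m. k m *\<^sub>R Z m a t)) UNIV"
    if "\<bar>a\<bar> \<le> r" "\<bar>t\<bar> \<le> r" for a t
  proof -
    define f where "f z = (a ^ fst (snd z) * t ^ snd (snd z)) *\<^sub>R cs z" for z :: "nat \<times> (nat \<times> nat)"
    have "(\<lambda>z. norm (f z)) summable_on UNIV"
      by (rule Infinite_Sum.abs_summable_on_comparison_test'[OF ws_summable])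
         (unfold f_def ws_def, rule norm_monomial_scaleR_le[OF that])
    then have f_sum: "(f has_sum infsum f UNIV) UNIV"
      by (simp add: abs_summable_summable)
    have "((\<lambda>n. f (m, n)) has_sum k m *\<^sub>R Z m a t) UNIV" for m
      using has_sum_scaleR[OF has_double_series_has_sum[OF c that], of "k m"]
      by (simp add: f_def cs_def scaleR_scaleR mult.commute)
    from sums_unique[OF has_sum_rows_imp_sums[OF f_sum this]] f_sum show ?thesis
      by (simp add: f_def[abs_def])
  qed
  show ?thesis
    unfolding double_series_bound_def
    using has_double_series_regroup[OF r ws_summable[unfolded ws_def[abs_def]] sums] ws_sum
    unfolding ws_def[abs_def] by fastforce
qed

lemma double_series_bound_suminf:
  fixes Z :: "nat \<Rightarrow> real \<Rightarrow> real \<Rightarrow> 'a::banach"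
  assumes Z: "\<And>m. double_series_bound r (M m) (Z m)" and summ: "summable (\<lambda>m. \<bar>k m\<bar> * M m)"
  shows "double_series_bound r (\<Sum>m. \<bar>k m\<bar> * M m) (\<lambda>a t. \<Sum>m. k m *\<^sub>R Z m a t)"
proof -
  from Z have "\<forall>m. \<exists>c. has_double_series r c (Z m) \<and> double_series_norm r c \<le> M m"
    by (simp add: double_series_bound_def)
  then obtain c where c: "\<And>m. has_double_series r (c m) (Z m)"
    and cM: "\<And>m. double_series_norm r (c m) \<le> M m"
    by metis
  have le: "\<bar>k m\<bar> * double_series_norm r (c m) \<le> \<bar>k m\<bar> * M m" for m
    by (intro mult_left_mono cM) simp
  have summ_c: "summable (\<lambda>m. \<bar>k m\<bar> * double_series_norm r (c m))"
    by (rule summable_comparison_test'[OF summ]) (use le double_series_norm_nonneg[OF c] in simp)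
  from has_double_series_suminf[where c = c and Z = Z, OF c summ_c] suminf_le[OF le summ_c summ]
  show ?thesis
    unfolding double_series_bound_def by (blast intro: order_trans)
qed

lemma has_double_series_uniform_limit:
  assumes F: "has_double_series r c F" and a: "\<bar>a\<bar> \<le> r"
  shows "uniform_limit {-r..r} (\<lambda>S s. \<Sum>n\<in>S. (a ^ fst n * s ^ snd n) *\<^sub>R c n) (F a)
           (finite_subsets_at_top UNIV)"
proof (rule uniform_limitI)
  fix \<epsilon> :: real
  assume "0 < \<epsilon>"
  define g where "g n = norm (c n) * r ^ (fst n + snd n)" for n
  have g: "(g has_sum double_series_norm r c) UNIV"
    unfolding g_def by (rule has_double_series_majorant[OF F])
  have "\<forall>\<^sub>F S in finite_subsets_at_top UNIV. dist (sum g S) (double_series_norm r c) < \<epsilon>"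
    using g \<open>0 < \<epsilon>\<close> unfolding has_sum_def by (rule tendstoD)
  moreover have "\<forall>\<^sub>F S in finite_subsets_at_top UNIV. finite S"
    by (rule eventually_finite_subsets_at_top_weakI) simp
  ultimately show "\<forall>\<^sub>F S in finite_subsets_at_top UNIV. \<forall>s\<in>{-r..r}.
      dist (\<Sum>n\<in>S. (a ^ fst n * s ^ snd n) *\<^sub>R c n) (F a s) < \<epsilon>"
  proof eventually_elim
    case (elim S)
    show ?case
    proof
      fix s :: real
      assume "s \<in> {-r..r}"
      then have s: "\<bar>s\<bar> \<le> r" by auto
      have "norm (F a s - (\<Sum>n\<in>S. (a ^ fst n * s ^ snd n) *\<^sub>R c n)) \<le> double_series_norm r c - sum g S"
        by (rule norm_infsum_le[OF has_sum_Diff[OF has_double_series_has_sum[OF F a s]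
              has_sum_finite[OF elim(2)] subset_UNIV] has_sum_Diff[OF g has_sum_finite[OF elim(2)] subset_UNIV]])
           (unfold g_def, rule norm_monomial_scaleR_le[OF a s])
      also have "\<dots> < \<epsilon>"
        using elim(1) by (simp add: dist_real_def)
      finally show "dist (\<Sum>n\<in>S. (a ^ fst n * s ^ snd n) *\<^sub>R c n) (F a s) < \<epsilon>"
        by (simp add: dist_norm norm_minus_commute)
    qed
  qed
qed

lemma has_integral_power:
  assumes "lo \<le> hi"
  shows "((\<lambda>s::real. s ^ j) has_integral (hi ^ Suc j - lo ^ Suc j) / Suc j) {lo..hi}"
proof -
  have "((\<lambda>s. s ^ Suc j / Suc j) has_real_derivative s ^ j) (at s within {lo..hi})" for s :: real
    by (auto intro!: derivative_eq_intros simp del: power_Suc of_nat_Suc)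
  then show ?thesis
    using fundamental_theorem_of_calculus[OF assms, of "\<lambda>s. s ^ Suc j / Suc j"]
    by (simp add: has_real_derivative_iff_has_vector_derivative diff_divide_distrib)
qed

lemma has_double_series_integral:
  fixes c :: "nat \<times> nat \<Rightarrow> 'a::banach"
  assumes F: "has_double_series r c F" and a: "\<bar>a\<bar> \<le> r" and lh: "-r \<le> lo" "lo \<le> hi" "hi \<le> r"
  shows "((\<lambda>n. (a ^ fst n * ((hi ^ Suc (snd n) - lo ^ Suc (snd n)) / Suc (snd n))) *\<^sub>R c n)
           has_sum integral {lo..hi} (F a)) UNIV"
proof -
  have ul: "uniform_limit (cbox lo hi) (\<lambda>S s. \<Sum>n\<in>S. (a ^ fst n * s ^ snd n) *\<^sub>R c n) (F a)
      (finite_subsets_at_top UNIV)"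
    by (rule uniform_limit_on_subset[OF has_double_series_uniform_limit[OF F a]]) (use lh in auto)
  have co: "continuous_on (cbox lo hi) (\<lambda>s. \<Sum>n\<in>S. (a ^ fst n * s ^ snd n) *\<^sub>R c n)" for S
    by (intro continuous_intros)
  obtain I J
    where I: "\<And>S. ((\<lambda>s. \<Sum>n\<in>S. (a ^ fst n * s ^ snd n) *\<^sub>R c n) has_integral I S) {lo..hi}"
      and J: "(F a has_integral J) {lo..hi}" and lim: "(I \<longlongrightarrow> J) (finite_subsets_at_top UNIV)"
    using uniform_limit_integral_cbox[OF ul co] by auto
  define h where "h n = (a ^ fst n * ((hi ^ Suc (snd n) - lo ^ Suc (snd n)) / Suc (snd n))) *\<^sub>R c n"
    for n
  have "((\<lambda>s. (a ^ fst n * s ^ snd n) *\<^sub>R c n) has_integral h n) {lo..hi}" for n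
    unfolding h_def by (intro has_integral_scaleR_left has_integral_mult_right has_integral_power lh)
  then have "sum h S = I S" if "finite S" for S
    using has_integral_unique[OF has_integral_sum[OF that] I] by blast
  then have "((\<lambda>S. sum h S) \<longlongrightarrow> J) (finite_subsets_at_top UNIV)"
    using tendsto_cong[OF eventually_finite_subsets_at_top_weakI, of _ "sum h" I] lim by auto
  then show ?thesis
    using J by (simp add: has_sum_def h_def[abs_def] integral_unique)
qed

lemma has_double_series_int0_has_sum:
  fixes c :: "nat \<times> nat \<Rightarrow> 'a::banach"
  assumes F: "has_double_series r c F" and a: "\<bar>a\<bar> \<le> r" and t: "\<bar>t\<bar> \<le> r"
  shows "((\<lambda>n. (a ^ fst n * t ^ Suc (snd n)) *\<^sub>R (c n /\<^sub>R real (Suc (snd n)))) has_sum int0 (F a) t) UNIV"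
proof (cases "0 \<le> t")
  case True
  from has_double_series_integral[OF F a, of 0 t] show ?thesis
    using True t by (simp add: int0_def scaleR_scaleR divide_inverse mult_ac)
next
  case False
  from has_double_series_integral[OF F a, of t 0]
  have "((\<lambda>n. - ((a ^ fst n * ((0 ^ Suc (snd n) - t ^ Suc (snd n)) / Suc (snd n))) *\<^sub>R c n))
      has_sum - integral {t..0} (F a)) UNIV"
    using False t by (simp add: has_sum_uminus)
  then show ?thesis
    using False by (simp add: int0_def scaleR_scaleR divide_inverse mult_ac)
qed

definition int0_coeffs :: "(nat \<times> nat \<Rightarrow> 'a::real_normed_vector) \<Rightarrow> nat \<times> nat \<Rightarrow> 'a" where
  "int0_coeffs c n = (if snd n = 0 then 0 else c (fst n, snd n - 1) /\<^sub>R real (snd n))"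

lemma infsum_int0_fibre:
  "(\<Sum>\<^sub>\<infinity>x | (fst x, Suc (snd x)) = n. c x /\<^sub>R real (Suc (snd x))) = int0_coeffs c n"
proof -
  obtain i j where n: "n = (i, j)" by (cases n)
  show ?thesis
  proof (cases j)
    case 0
    have "{x. (fst x, Suc (snd x)) = (i, 0)} = {}" by auto
    then show ?thesis by (simp only: int0_coeffs_def n 0) simp
  next
    case (Suc j')
    have "{x. (fst x, Suc (snd x)) = (i, Suc j')} = {(i, j')}" by auto
    then show ?thesis by (simp only: n Suc) (simp add: int0_coeffs_def)
  qed
qed

lemma has_double_series_int0:
  fixes c :: "nat \<times> nat \<Rightarrow> 'a::banach"
  assumes F: "has_double_series r c F"
  shows "has_double_series r (int0_coeffs c) (\<lambda>a t. int0 (F a) t)"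
    and "double_series_norm r (int0_coeffs c) \<le> r * double_series_norm r c"
proof -
  have r: "0 < r" using F by (rule has_double_series_pos)
  define e where "e n = (fst n, Suc (snd n))" for n :: "nat \<times> nat"
  define c' where "c' n = c n /\<^sub>R real (Suc (snd n))" for n
  have le: "norm (c' n) * r ^ (fst (e n) + snd (e n)) \<le> r * (norm (c n) * r ^ (fst n + snd n))" for n
  proof -
    have "norm (c' n) \<le> norm (c n)"
      by (simp add: c'_def mult_left_le_one_le inverse_le_1_iff)
    then show ?thesis
      using r by (simp add: e_def mult_right_mono mult_ac)
  qed
  have maj: "((\<lambda>n. r * (norm (c n) * r ^ (fst n + snd n))) has_sum r * double_series_norm r c) UNIV"
    by (rule has_sum_cmult_right[OF has_double_series_majorant[OF F]])
  have maj': "(\<lambda>n. norm (c' n) * r ^ (fst (e n) + snd (e n))) summable_on UNIV"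
    using r by (intro summable_on_comparison_test[OF has_sum_imp_summable[OF maj] le]) auto
  have sums: "((\<lambda>n. (a ^ fst (e n) * t ^ snd (e n)) *\<^sub>R c' n) has_sum int0 (F a) t) UNIV"
    if "\<bar>a\<bar> \<le> r" "\<bar>t\<bar> \<le> r" for a t
    using has_double_series_int0_has_sum[OF F that] by (simp add: e_def c'_def)
  have coeffs: "(\<Sum>\<^sub>\<infinity>x | e x = n. c' x) = int0_coeffs c n" for n
    unfolding e_def c'_def by (rule infsum_int0_fibre)
  show "has_double_series r (int0_coeffs c) (\<lambda>a t. int0 (F a) t)"
    using has_double_series_regroup(1)[OF r maj' sums] by (simp add: coeffs)
  have "double_series_norm r (int0_coeffs c) \<le> (\<Sum>\<^sub>\<infinity>n. norm (c' n) * r ^ (fst (e n) + snd (e n)))"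
    using has_double_series_regroup(2)[OF r maj' sums] by (simp add: coeffs)
  also have "\<dots> \<le> r * double_series_norm r c"
    using infsum_mono[OF maj' has_sum_imp_summable[OF maj] le] infsumI[OF maj] by simp
  finally show "double_series_norm r (int0_coeffs c) \<le> r * double_series_norm r c" .
qed

lemma powser_scaleR_norm_summable_inside:
  fixes b :: "nat \<Rightarrow> 'a::real_normed_vector"
  assumes "summable (\<lambda>j. s ^ j *\<^sub>R b j)" and "0 \<le> \<rho>" and "\<rho> < s"
  shows "summable (\<lambda>j. norm (b j) * \<rho> ^ j)"
proof -
  have s: "0 < s" using assms(2,3) by linarith
  have "Bseq (\<lambda>j. s ^ j *\<^sub>R b j)"
    using summable_LIMSEQ_zero[OF assms(1)] by (rule convergent_imp_Bseq[OF convergentI])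
  then obtain K where K: "\<And>j. norm (s ^ j *\<^sub>R b j) \<le> K"
    unfolding Bseq_def by blast
  have le: "norm (b j) * \<rho> ^ j \<le> K * (\<rho> / s) ^ j" for j
  proof -
    have "norm (b j) * \<rho> ^ j = norm (s ^ j *\<^sub>R b j) * (\<rho> / s) ^ j"
      using s by (simp add: power_divide)
    also have "\<dots> \<le> K * (\<rho> / s) ^ j"
      using K[of j] assms(2) s by (intro mult_right_mono) auto
    finally show ?thesis .
  qed
  have "norm (\<rho> / s) < 1"
    using assms(2,3) s by (simp add: divide_less_eq)
  then have "summable (\<lambda>j. K * (\<rho> / s) ^ j)"
    by (intro summable_mult summable_geometric)
  then show ?thesis
    by (rule summable_comparison_test') (use le assms(2) in simp)
qed

lemma has_double_series_scaleR_analytic: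
  fixes A0 :: "real \<Rightarrow> 'a::banach"
  assumes "real_analytic A0"
  shows "\<exists>r c. has_double_series r c (\<lambda>a t. a *\<^sub>R A0 t)"
proof -
  obtain R b where R: "0 < R" and b: "\<And>t. \<bar>t\<bar> < R \<Longrightarrow> (\<lambda>j. t ^ j *\<^sub>R b j) sums A0 t"
    using assms unfolding real_analytic_def by (metis diff_zero)
  define r where "r = R / 2"
  have r: "0 < r" "r < R" using R by (auto simp: r_def)
  have "summable (\<lambda>j. norm (b j) * r ^ j)"
    using b[of "(r + R) / 2"] r
    by (intro powser_scaleR_norm_summable_inside[where s = "(r + R) / 2"]) (auto simp: sums_iff)
  then have maj: "summable (\<lambda>j. norm (b j) * r ^ (1 + j))"
    using summable_mult[of "\<lambda>j. norm (b j) * r ^ j" r] by (simp add: mult_ac)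
  have sums: "((\<lambda>j. (a ^ fst (1, j) * t ^ snd (1, j)) *\<^sub>R b j) has_sum a *\<^sub>R A0 t) UNIV"
    if a: "\<bar>a\<bar> \<le> r" and t: "\<bar>t\<bar> \<le> r" for a t
  proof (rule norm_summable_imp_has_sum)
    show "summable (\<lambda>j. norm ((a ^ fst (1, j) * t ^ snd (1, j)) *\<^sub>R b j))"
      by (rule summable_comparison_test'[OF maj])
         (simp add: norm_monomial_scaleR_le[OF a t, of 1, simplified])
    show "(\<lambda>j. (a ^ fst (1, j) * t ^ snd (1, j)) *\<^sub>R b j) sums (a *\<^sub>R A0 t)"
      using sums_scaleR_right[OF b[of t], of a] t r by (simp add: scaleR_scaleR)
  qed
  have "(\<lambda>j. norm (b j) * r ^ (fst (1::nat, j) + snd (1::nat, j))) summable_on UNIV"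
    using maj r by (intro summable_nonneg_imp_summable_on) simp_all
  from has_double_series_regroup(1)[OF r(1) this sums] show ?thesis by blast
qed

definition magnus_coeff :: "nat \<Rightarrow> real" where
  "magnus_coeff j = (-1) ^ Suc j * real (Suc j) / fact (Suc j + 1)"

lemma magnus_step_eq: "magnus_step B t = (\<Sum>j. magnus_coeff j *\<^sub>R (ad (int0 B t) ^^ Suc j) (B t))"
  by (simp add: magnus_step_def magnus_coeff_def)

lemma abs_magnus_coeff_le: "\<bar>magnus_coeff j\<bar> \<le> inverse (fact j)"
proof -
  have "\<bar>magnus_coeff j\<bar> = inverse (real (Suc j + 1) * fact j)"
    by (simp add: magnus_coeff_def fact_Suc abs_mult field_simps del: of_nat_Suc)
  also have "\<dots> \<le> inverse (fact j)"
    by (rule le_imp_inverse_le) (auto simp: fact_ge_1)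
  finally show ?thesis .
qed

lemma double_series_bound_magnus_step:
  fixes B :: "real \<Rightarrow> real \<Rightarrow> 'a::{real_normed_algebra,banach}"
  assumes B: "double_series_bound r M B"
  shows "\<exists>M'. double_series_bound r M' (\<lambda>a t. magnus_step (B a) t)"
proof -
  obtain c where c: "has_double_series r c B" "double_series_norm r c \<le> M"
    using B by (auto simp: double_series_bound_def)
  have r: "0 < r" using c(1) by (rule has_double_series_pos)
  have M: "0 \<le> M" using B by (rule double_series_bound_nonneg)
  have X: "double_series_bound r (r * M) (\<lambda>a t. int0 (B a) t)"
    using has_double_series_int0[OF c(1)] c(2) r unfolding double_series_bound_def
    by (blast intro: order_trans mult_left_mono less_imp_le)
  define Mj where "Mj j = (2 * (r * M)) ^ Suc j * M" for j
  have terms: "double_series_bound r (Mj j) (\<lambda>a t. (ad (int0 (B a) t) ^^ Suc j) (B a t))" for j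
    unfolding Mj_def by (rule double_series_bound_ad_power[OF X B])
  have Mj_nonneg: "0 \<le> Mj j" for j
    using r M by (simp add: Mj_def)
  have bound: "\<bar>magnus_coeff j\<bar> * Mj j \<le> (2 * r * M * M) * (inverse (fact j) * (2 * r * M) ^ j)" for j
  proof -
    have "\<bar>magnus_coeff j\<bar> * Mj j \<le> inverse (fact j) * Mj j"
      using r M by (intro mult_right_mono abs_magnus_coeff_le) (simp add: Mj_def)
    then show ?thesis by (simp add: Mj_def mult_ac)
  qed
  have "summable (\<lambda>j. (2 * r * M * M) * (inverse (fact j) * (2 * r * M) ^ j))"
    by (rule summable_mult[OF summable_exp])
  then have "summable (\<lambda>j. \<bar>magnus_coeff j\<bar> * Mj j)"
    by (rule summable_comparison_test') (use bound in \<open>simp add: abs_mult abs_of_nonneg[OF Mj_nonneg]\<close>)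
  from double_series_bound_suminf[OF terms this] show ?thesis
    unfolding magnus_step_eq by blast
qed

lemma double_series_bound_alphaA:
  fixes A0 :: "real \<Rightarrow> 'a::{real_normed_algebra,banach}"
  assumes "real_analytic A0"
  shows "\<exists>r M. double_series_bound r M (\<lambda>a t. alphaA A0 a k t)"
proof (induction k)
  case 0
  from has_double_series_scaleR_analytic[OF assms] show ?case
    by (auto simp: double_series_bound_def)
next
  case (Suc k)
  then obtain r M where "double_series_bound r M (\<lambda>a t. alphaA A0 a k t)"
    by blast
  from double_series_bound_magnus_step[OF this] show ?case
    by (simp only: alphaA.simps) blast
qed

section \<open>Vanishing of low-order coefficients\<close>

lemma suminf_powser_scaleR_shift:
  fixes g :: "nat \<Rightarrow> 'a::real_normed_vector"
  assumes "summable (\<lambda>i. s ^ i *\<^sub>R g i)" and "summable (\<lambda>i. s ^ i *\<^sub>R g (i + j))"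
    and "\<And>i. i < j \<Longrightarrow> g i = 0"
  shows "(\<Sum>i. s ^ i *\<^sub>R g i) = s ^ j *\<^sub>R (\<Sum>i. s ^ i *\<^sub>R g (i + j))"
proof -
  have "(\<Sum>i<j. s ^ i *\<^sub>R g i) = 0"
    using assms(3) by simp
  then have "(\<lambda>i. s ^ (i + j) *\<^sub>R g (i + j)) sums (\<Sum>i. s ^ i *\<^sub>R g i)"
    using summable_sums[OF assms(1)] sums_iff_shift[of "\<lambda>i. s ^ i *\<^sub>R g i" j] by simp
  moreover have "(\<lambda>i. s ^ (i + j) *\<^sub>R g (i + j)) sums (s ^ j *\<^sub>R (\<Sum>i. s ^ i *\<^sub>R g (i + j)))"
    using sums_scaleR_right[OF summable_sums[OF assms(2)], of "s ^ j"]
    by (simp add: power_add scaleR_scaleR mult.commute)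
  ultimately show ?thesis
    by (rule sums_unique2)
qed

lemma powser_scaleR_tendsto_at_right_0:
  fixes g :: "nat \<Rightarrow> 'a::banach"
  assumes \<rho>: "0 < \<rho>" and maj: "summable (\<lambda>i. norm (g i) * \<rho> ^ i)"
  shows "((\<lambda>s. \<Sum>i. s ^ i *\<^sub>R g i) \<longlongrightarrow> g 0) (at_right 0)"
proof -
  have "uniform_limit {0..\<rho>} (\<lambda>n s. \<Sum>i<n. s ^ i *\<^sub>R g i) (\<lambda>s. \<Sum>i. s ^ i *\<^sub>R g i) sequentially"
    by (rule Weierstrass_m_test[OF _ maj]) (auto simp: mult.commute intro!: mult_right_mono power_mono)
  then have "continuous_on {0..\<rho>} (\<lambda>s. \<Sum>i. s ^ i *\<^sub>R g i)"
    by (rule uniform_limit_theorem[rotated]) (auto intro!: always_eventually continuous_intros)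
  then have "((\<lambda>s. \<Sum>i. s ^ i *\<^sub>R g i) \<longlongrightarrow> (\<Sum>i. 0 ^ i *\<^sub>R g i)) (at 0 within {0..\<rho>})"
    using \<rho> by (simp add: continuous_on_def)
  then have "((\<lambda>s. \<Sum>i. s ^ i *\<^sub>R g i) \<longlongrightarrow> (\<Sum>i. 0 ^ i *\<^sub>R g i)) (at_right 0)"
    using \<rho> by (simp add: at_within_Icc_at_right)
  moreover have "(\<lambda>i. (0::real) ^ i *\<^sub>R g i) = (\<lambda>i. if i = 0 then g i else 0)"
    by (simp add: fun_eq_iff power_0_left)
  ultimately show ?thesis
    using sums_unique[OF sums_single[of 0 g]] by simp
qed

lemma powser_scaleR_coeff_eq_0:
  fixes g :: "nat \<Rightarrow> 'a::banach"
  assumes \<rho>: "0 < \<rho>" and maj: "summable (\<lambda>i. norm (g i) * \<rho> ^ i)"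
    and small: "\<forall>\<^sub>F s in at_right 0. norm (\<Sum>i. s ^ i *\<^sub>R g i) \<le> K * s ^ p"
    and "j < p"
  shows "g j = 0"
  using \<open>j < p\<close>
proof (induction j rule: less_induct)
  case (less j)
  have maj_shifted: "summable (\<lambda>i. norm (g (i + m)) * \<rho> ^ i)" for m
    using summable_divide[OF summable_ignore_initial_segment[OF maj, of m], of "\<rho> ^ m"] \<rho>
    by (simp add: power_add)
  have summable_shifted: "summable (\<lambda>i. s ^ i *\<^sub>R g (i + m))" if "0 < s" "s < \<rho>" for s m
    by (rule summable_norm_cancel, rule summable_comparison_test'[OF maj_shifted[of m]])
       (use that in \<open>auto simp: mult.commute intro!: mult_right_mono power_mono\<close>)
  define h where "h s = (\<Sum>i. s ^ i *\<^sub>R g (i + j))" for s :: real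
  have "(h \<longlongrightarrow> g j) (at_right 0)"
    using powser_scaleR_tendsto_at_right_0[OF \<rho> maj_shifted[of j]] by (simp add: h_def[abs_def])
  moreover have "(h \<longlongrightarrow> 0) (at_right 0)"
  proof (rule Lim_null_comparison)
    show "\<forall>\<^sub>F s in at_right 0. norm (h s) \<le> K * s ^ (p - j)"
      using eventually_at_right_real[OF \<rho>] small
    proof eventually_elim
      case (elim s)
      then have s: "0 < s" "s < \<rho>" by auto
      have "(\<Sum>i. s ^ i *\<^sub>R g i) = s ^ j *\<^sub>R h s"
        unfolding h_def using summable_shifted[OF s, of 0] summable_shifted[OF s, of j] less
        by (intro suminf_powser_scaleR_shift) auto
      with elim have "s ^ j * norm (h s) \<le> s ^ j * (K * s ^ (p - j))"
        using less.prems s by (simp add: mult_ac flip: power_add)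
      then show "norm (h s) \<le> K * s ^ (p - j)"
        using s by simp
    qed
    have "((\<lambda>s. K * s ^ (p - j)) \<longlongrightarrow> K * 0 ^ (p - j)) (at_right 0)"
      by (intro tendsto_intros)
    then show "((\<lambda>s. K * s ^ (p - j)) \<longlongrightarrow> 0) (at_right 0)"
      using less.prems by (simp add: power_0_left)
  qed
  ultimately show "g j = 0"
    using tendsto_unique[OF trivial_limit_at_right_real] by blast
qed

lemma has_double_series_row_majorant:
  assumes "has_double_series r c F"
  shows "(\<lambda>j. norm (c (i, j)) * r ^ (i + j)) summable_on UNIV"
proof -
  have "(\<lambda>(i, j). norm (c (i, j)) * r ^ (i + j)) summable_on Sigma UNIV (\<lambda>_. UNIV)"
    using assms by (simp add: has_double_series_def case_prod_unfold)
  then show ?thesis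
    by (rule summable_on_SigmaD1[where f = "\<lambda>i j. norm (c (i, j)) * r ^ (i + j)"]) simp
qed

lemma has_double_series_row_summable:
  assumes "has_double_series r c F"
  shows "summable (\<lambda>j. norm (c (i, j)) * r ^ j)"
proof -
  have r: "0 < r" using assms by (rule has_double_series_pos)
  have "summable (\<lambda>j. norm (c (i, j)) * r ^ (i + j) / r ^ i)"
    using has_double_series_row_majorant[OF assms] by (intro summable_divide summable_on_imp_summable)
  then show ?thesis
    using r by (simp add: power_add)
qed

lemma has_double_series_row_has_sum:
  fixes c :: "nat \<times> nat \<Rightarrow> 'a::banach"
  assumes F: "has_double_series r c F" and t: "\<bar>t\<bar> \<le> r"
  shows "((\<lambda>j. t ^ j *\<^sub>R c (i, j)) has_sum (\<Sum>j. t ^ j *\<^sub>R c (i, j))) UNIV"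
proof -
  have norms: "summable (\<lambda>j. norm (t ^ j *\<^sub>R c (i, j)))"
    by (rule summable_comparison_test'[OF has_double_series_row_summable[OF F, of i]])
       (use t in \<open>auto simp: power_abs mult.commute intro!: mult_right_mono power_mono\<close>)
  show ?thesis
    by (rule norm_summable_imp_has_sum[OF norms summable_sums[OF summable_norm_cancel[OF norms]]])
qed

lemma has_double_series_row_sums_summable:
  fixes c :: "nat \<times> nat \<Rightarrow> 'a::banach"
  assumes F: "has_double_series r c F" and t: "\<bar>t\<bar> \<le> r"
  shows "summable (\<lambda>i. norm (\<Sum>j. t ^ j *\<^sub>R c (i, j)) * r ^ i)"
proof -
  have r: "0 < r" using F by (rule has_double_series_pos)
  define R where "R i = (\<Sum>\<^sub>\<infinity>j. norm (c (i, j)) * r ^ (i + j))" for i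
  note rows = has_double_series_row_majorant[OF F]
  have "(\<lambda>i. \<Sum>\<^sub>\<infinity>j. (\<lambda>n. norm (c n) * r ^ (fst n + snd n)) (i, j)) summable_on UNIV"
    by (rule summable_on_SigmaD) (use F rows in \<open>simp_all add: has_double_series_def\<close>)
  then have "R summable_on UNIV"
    by (simp add: R_def[abs_def])
  then have R: "summable R"
    by (rule summable_on_imp_summable)
  have "norm (\<Sum>j. t ^ j *\<^sub>R c (i, j)) * r ^ i \<le> R i" for i
  proof -
    have "((\<lambda>j. (r ^ i * t ^ j) *\<^sub>R c (i, j)) has_sum r ^ i *\<^sub>R (\<Sum>j. t ^ j *\<^sub>R c (i, j))) UNIV"
      using has_sum_scaleR[OF has_double_series_row_has_sum[OF F t], of "r ^ i"]
      by (simp add: scaleR_scaleR)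
    then have "norm (r ^ i *\<^sub>R (\<Sum>j. t ^ j *\<^sub>R c (i, j))) \<le> R i"
      unfolding R_def
      by (rule norm_infsum_le[OF _ has_sum_infsum[OF rows]])
         (rule norm_monomial_scaleR_le[OF _ t], use r in simp)
    then show ?thesis
      using r by (simp add: mult.commute)
  qed
  then show ?thesis
    by (intro summable_comparison_test'[OF R]) (simp add: r less_imp_le)
qed

lemma has_double_series_iterated_sums:
  fixes c :: "nat \<times> nat \<Rightarrow> 'a::banach"
  assumes F: "has_double_series r c F" and a: "\<bar>a\<bar> \<le> r" and t: "\<bar>t\<bar> \<le> r"
  shows "(\<lambda>i. a ^ i *\<^sub>R (\<Sum>j. t ^ j *\<^sub>R c (i, j))) sums F a t"
proof -
  have "((\<lambda>j. (a ^ i * t ^ j) *\<^sub>R c (i, j)) has_sum a ^ i *\<^sub>R (\<Sum>j. t ^ j *\<^sub>R c (i, j))) UNIV" for i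
    using has_sum_scaleR[OF has_double_series_row_has_sum[OF F t], of "a ^ i"]
    by (simp add: scaleR_scaleR)
  then show ?thesis
    using has_sum_rows_imp_sums[OF has_double_series_has_sum[OF F a t],
        of "\<lambda>i. a ^ i *\<^sub>R (\<Sum>j. t ^ j *\<^sub>R c (i, j))"]
    by simp
qed

lemma has_double_series_coeff_eq_0_fst:
  fixes c :: "nat \<times> nat \<Rightarrow> 'a::banach"
  assumes F: "has_double_series r c F" and \<delta>: "0 < \<delta>"
    and small: "\<And>a t. 0 < a \<Longrightarrow> a < \<delta> \<Longrightarrow> 0 < t \<Longrightarrow> t < \<delta> \<Longrightarrow> norm (F a t) \<le> C * a ^ q * t ^ p"
    and "i < q"
  shows "c (i, j) = 0"
proof -
  have r: "0 < r" using F by (rule has_double_series_pos)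
  define \<epsilon> where "\<epsilon> = min \<delta> r"
  have \<epsilon>: "0 < \<epsilon>" using \<delta> r by (simp add: \<epsilon>_def)
  \<comment> \<open>For fixed \<open>t\<close> the coefficients of \<open>a\<^sup>i\<close> vanish for \<open>i < q\<close>; each of them is a power series in \<open>t\<close>.\<close>
  have row_eq_0: "(\<Sum>j. t ^ j *\<^sub>R c (i, j)) = 0" if t: "0 < t" "t < \<epsilon>" for t
  proof (rule powser_scaleR_coeff_eq_0[where g = "\<lambda>i. \<Sum>j. t ^ j *\<^sub>R c (i, j)", OF r _ _ \<open>i < q\<close>])
    show "summable (\<lambda>i. norm (\<Sum>j. t ^ j *\<^sub>R c (i, j)) * r ^ i)"
      using t by (intro has_double_series_row_sums_summable[OF F]) (simp add: \<epsilon>_def)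
    show "\<forall>\<^sub>F s in at_right 0. norm (\<Sum>i. s ^ i *\<^sub>R (\<Sum>j. t ^ j *\<^sub>R c (i, j))) \<le> (C * t ^ p) * s ^ q"
      using eventually_at_right_real[OF \<epsilon>]
    proof eventually_elim
      case (elim s)
      then have "(\<Sum>i. s ^ i *\<^sub>R (\<Sum>j. t ^ j *\<^sub>R c (i, j))) = F s t"
        using t by (intro sums_unique[symmetric] has_double_series_iterated_sums[OF F]) (auto simp: \<epsilon>_def)
      then show ?case
        using elim t small[of s t] by (simp add: \<epsilon>_def mult_ac)
    qed
  qed
  show ?thesis
  proof (rule powser_scaleR_coeff_eq_0[OF r has_double_series_row_summable[OF F]])
    show "\<forall>\<^sub>F t in at_right 0. norm (\<Sum>j. t ^ j *\<^sub>R c (i, j)) \<le> 0 * t ^ Suc j"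
      using eventually_at_right_real[OF \<epsilon>] by eventually_elim (simp add: row_eq_0)
  qed simp
qed

lemma has_double_series_swap:
  assumes "has_double_series r c F"
  shows "has_double_series r (c \<circ> prod.swap) (\<lambda>a t. F t a)"
proof -
  have "((\<lambda>n. (a ^ fst n * t ^ snd n) *\<^sub>R c (prod.swap n)) has_sum F t a) UNIV"
    if "\<bar>a\<bar> \<le> r" "\<bar>t\<bar> \<le> r" for a t
    using has_double_series_has_sum[OF assms that(2,1)]
    by (subst has_sum_reindex_bij_betw[of prod.swap, symmetric]) (auto simp: mult.commute)
  moreover have "(\<lambda>n. norm (c (prod.swap n)) * r ^ (fst n + snd n)) summable_on UNIV"
    using assms unfolding has_double_series_def
    by (subst summable_on_reindex_bij_betw[of prod.swap, symmetric]) (auto simp: add.commute)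
  ultimately show ?thesis
    using assms by (simp add: has_double_series_def)
qed

lemma bigO_at0_iff:
  "bigO_at0 f q p \<longleftrightarrow>
     (\<exists>C \<epsilon>. 0 < \<epsilon> \<and> (\<forall>a t. \<bar>a\<bar> < \<epsilon> \<longrightarrow> \<bar>t\<bar> < \<epsilon> \<longrightarrow> norm (f a t) \<le> C * \<bar>a\<bar> ^ q * \<bar>t\<bar> ^ p))"
proof
  assume "bigO_at0 f q p"
  then obtain C d where d: "0 < d"
    and C: "\<And>x. dist x (0, 0) < d \<Longrightarrow> norm (f (fst x) (snd x)) \<le> C * \<bar>fst x\<bar> ^ q * \<bar>snd x\<bar> ^ p"
    unfolding bigO_at0_def eventually_nhds_metric by blast
  have "norm (f a t) \<le> C * \<bar>a\<bar> ^ q * \<bar>t\<bar> ^ p" if "\<bar>a\<bar> < d / 2" "\<bar>t\<bar> < d / 2" for a t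
  proof -
    have "dist (a, t) (0, 0) \<le> \<bar>a\<bar> + \<bar>t\<bar>"
      using sqrt_sum_squares_le_sum_abs[of a t] by (simp add: dist_Pair_Pair)
    then show ?thesis
      using C[of "(a, t)"] that by simp
  qed
  then show "\<exists>C \<epsilon>. 0 < \<epsilon> \<and> (\<forall>a t. \<bar>a\<bar> < \<epsilon> \<longrightarrow> \<bar>t\<bar> < \<epsilon> \<longrightarrow> norm (f a t) \<le> C * \<bar>a\<bar> ^ q * \<bar>t\<bar> ^ p)"
    using d by (intro exI[of _ C] exI[of _ "d / 2"]) auto
next
  assume "\<exists>C \<epsilon>. 0 < \<epsilon> \<and> (\<forall>a t. \<bar>a\<bar> < \<epsilon> \<longrightarrow> \<bar>t\<bar> < \<epsilon> \<longrightarrow> norm (f a t) \<le> C * \<bar>a\<bar> ^ q * \<bar>t\<bar> ^ p)"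
  then obtain C \<epsilon> where \<epsilon>: "0 < \<epsilon>"
    and C: "\<And>a t. \<bar>a\<bar> < \<epsilon> \<Longrightarrow> \<bar>t\<bar> < \<epsilon> \<Longrightarrow> norm (f a t) \<le> C * \<bar>a\<bar> ^ q * \<bar>t\<bar> ^ p"
    by blast
  have box: "\<forall>\<^sub>F x in nhds (0::real, 0::real). x \<in> {-\<epsilon><..<\<epsilon>} \<times> {-\<epsilon><..<\<epsilon>}"
    using \<epsilon> by (intro eventually_nhds_in_open open_Times) auto
  show "bigO_at0 f q p"
    unfolding bigO_at0_def
  proof (intro exI[of _ C] eventually_mono[OF box])
    fix x :: "real \<times> real"
    assume "x \<in> {-\<epsilon><..<\<epsilon>} \<times> {-\<epsilon><..<\<epsilon>}"
    then show "norm (f (fst x) (snd x)) \<le> C * \<bar>fst x\<bar> ^ q * \<bar>snd x\<bar> ^ p"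
      by (intro C) (auto simp: abs_less_iff)
  qed
qed

definition coeffs_vanish_below :: "(nat \<times> nat \<Rightarrow> 'a::zero) \<Rightarrow> nat \<Rightarrow> nat \<Rightarrow> bool" where
  "coeffs_vanish_below c q p \<longleftrightarrow> (\<forall>n. c n \<noteq> 0 \<longrightarrow> q \<le> fst n \<and> p \<le> snd n)"

lemma has_double_series_coeffs_vanish_below:
  fixes c :: "nat \<times> nat \<Rightarrow> 'a::banach"
  assumes F: "has_double_series r c F" and "bigO_at0 F q p"
  shows "coeffs_vanish_below c q p"
  unfolding coeffs_vanish_below_def
proof (intro allI impI)
  fix n
  assume "c n \<noteq> 0"
  obtain C \<epsilon> where \<epsilon>: "0 < \<epsilon>"
    and C: "\<And>a t. \<bar>a\<bar> < \<epsilon> \<Longrightarrow> \<bar>t\<bar> < \<epsilon> \<Longrightarrow> norm (F a t) \<le> C * \<bar>a\<bar> ^ q * \<bar>t\<bar> ^ p"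
    using \<open>bigO_at0 F q p\<close> unfolding bigO_at0_iff by blast
  obtain i j where n: "n = (i, j)" by (cases n)
  have small: "norm (F a t) \<le> C * a ^ q * t ^ p" if "0 < a" "a < \<epsilon>" "0 < t" "t < \<epsilon>" for a t
    using C[of a t] that by simp
  have small_swap: "norm (F t a) \<le> C * a ^ p * t ^ q" if "0 < a" "a < \<epsilon>" "0 < t" "t < \<epsilon>" for a t
    using C[of t a] that by (simp add: mult_ac)
  have "c (i, j) = 0" if "i < q"
    by (rule has_double_series_coeff_eq_0_fst[OF F \<epsilon> small that])
  moreover have "(c \<circ> prod.swap) (j, i) = 0" if "j < p"
    by (rule has_double_series_coeff_eq_0_fst[OF has_double_series_swap[OF F] \<epsilon> small_swap that])
  ultimately show "q \<le> fst n \<and> p \<le> snd n"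
    using \<open>c n \<noteq> 0\<close> by (force simp: n)
qed

section \<open>Leading terms\<close>

definition t_coeff :: "(nat \<times> nat \<Rightarrow> 'a::real_normed_vector) \<Rightarrow> nat \<Rightarrow> real \<Rightarrow> 'a" where
  "t_coeff c p a = (\<Sum>\<^sub>\<infinity>i. a ^ i *\<^sub>R c (i, p))"

lemma power_le_power_mult_power_diff:
  fixes s \<rho> :: real
  assumes "0 \<le> s" "s \<le> \<rho>" "m \<le> n"
  shows "s ^ n \<le> s ^ m * \<rho> ^ (n - m)"
proof -
  have "s ^ n = s ^ m * s ^ (n - m)"
    using assms(3) by (simp flip: power_add)
  also have "\<dots> \<le> s ^ m * \<rho> ^ (n - m)"
    using assms by (intro mult_left_mono power_mono) auto
  finally show ?thesis .
qed

lemma has_double_series_norm_le_monomial: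
  assumes F: "has_double_series r c F" and vanish: "coeffs_vanish_below c q p"
    and a: "\<bar>a\<bar> \<le> r" and t: "\<bar>t\<bar> \<le> r"
  shows "norm (F a t) \<le> \<bar>a\<bar> ^ q * \<bar>t\<bar> ^ p / r ^ (q + p) * double_series_norm r c"
proof -
  have r: "0 < r" using F by (rule has_double_series_pos)
  define w where "w = \<bar>a\<bar> ^ q * \<bar>t\<bar> ^ p / r ^ (q + p)"
  have "norm ((a ^ fst n * t ^ snd n) *\<^sub>R c n) \<le> w * (norm (c n) * r ^ (fst n + snd n))" for n
  proof (cases "c n = 0")
    case True
    then show ?thesis by simp
  next
    case False
    with vanish have n: "q \<le> fst n \<and> p \<le> snd n" unfolding coeffs_vanish_below_def by blast
    have "\<bar>a\<bar> ^ fst n * \<bar>t\<bar> ^ snd n \<le> (\<bar>a\<bar> ^ q * r ^ (fst n - q)) * (\<bar>t\<bar> ^ p * r ^ (snd n - p))"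
      using a t n by (intro mult_mono power_le_power_mult_power_diff) auto
    also have "\<dots> = w * r ^ (fst n + snd n)"
    proof -
      have "r ^ (fst n + snd n) = r ^ (q + p) * (r ^ (fst n - q) * r ^ (snd n - p))"
        using n by (simp flip: power_add)
      then show ?thesis
        using r by (simp add: w_def)
    qed
    finally have "\<bar>a\<bar> ^ fst n * \<bar>t\<bar> ^ snd n \<le> w * r ^ (fst n + snd n)" .
    from mult_right_mono[OF this norm_ge_zero[of "c n"]] show ?thesis
      by (simp add: abs_mult power_abs mult_ac)
  qed
  then show ?thesis
    unfolding w_def[symmetric]
    by (rule norm_infsum_le[OF has_double_series_has_sum[OF F a t]
          has_sum_cmult_right[OF has_double_series_majorant[OF F]]])
qed

lemma has_double_series_restrict:
  fixes c :: "nat \<times> nat \<Rightarrow> 'a::banach"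
  assumes F: "has_double_series r c F"
  shows "has_double_series r (\<lambda>n. if n \<in> S then c n else 0)
           (\<lambda>a t. \<Sum>\<^sub>\<infinity>n\<in>S. (a ^ fst n * t ^ snd n) *\<^sub>R c n)"
    and "has_double_series r (\<lambda>n. if n \<in> S then 0 else c n)
           (\<lambda>a t. F a t - (\<Sum>\<^sub>\<infinity>n\<in>S. (a ^ fst n * t ^ snd n) *\<^sub>R c n))"
proof -
  have r: "0 < r" using F by (rule has_double_series_pos)
  have maj: "(\<lambda>n. norm (c n) * r ^ (fst n + snd n)) summable_on UNIV"
    using F by (simp add: has_double_series_def)
  have maj_le: "(\<lambda>n. norm (c' n) * r ^ (fst n + snd n)) summable_on UNIV"
    if "\<And>n. norm (c' n) \<le> norm (c n)" for c' :: "nat \<times> nat \<Rightarrow> 'a"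
    by (rule summable_on_comparison_test[OF maj]) (use r that in \<open>auto intro: mult_right_mono\<close>)
  have sum_S: "((\<lambda>n. (a ^ fst n * t ^ snd n) *\<^sub>R c n) has_sum
      (\<Sum>\<^sub>\<infinity>n\<in>S. (a ^ fst n * t ^ snd n) *\<^sub>R c n)) S"
    if "\<bar>a\<bar> \<le> r" "\<bar>t\<bar> \<le> r" for a t
    using summable_on_subset_banach[OF abs_summable_summable[OF has_double_series_abs_summable[OF F that]]]
    by simp
  show "has_double_series r (\<lambda>n. if n \<in> S then c n else 0)
      (\<lambda>a t. \<Sum>\<^sub>\<infinity>n\<in>S. (a ^ fst n * t ^ snd n) *\<^sub>R c n)"
    unfolding has_double_series_def
  proof (intro conjI allI impI r)
    show "(\<lambda>n. norm (if n \<in> S then c n else 0) * r ^ (fst n + snd n)) summable_on UNIV"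
      by (rule maj_le) simp
    fix a t :: real
    assume "\<bar>a\<bar> \<le> r" "\<bar>t\<bar> \<le> r"
    from sum_S[OF this] show "((\<lambda>n. (a ^ fst n * t ^ snd n) *\<^sub>R (if n \<in> S then c n else 0)) has_sum
        (\<Sum>\<^sub>\<infinity>n\<in>S. (a ^ fst n * t ^ snd n) *\<^sub>R c n)) UNIV"
      by (rule has_sum_cong_neutral[THEN iffD1, rotated -1]) auto
  qed
  show "has_double_series r (\<lambda>n. if n \<in> S then 0 else c n)
      (\<lambda>a t. F a t - (\<Sum>\<^sub>\<infinity>n\<in>S. (a ^ fst n * t ^ snd n) *\<^sub>R c n))"
    unfolding has_double_series_def
  proof (intro conjI allI impI r)
    show "(\<lambda>n. norm (if n \<in> S then 0 else c n) * r ^ (fst n + snd n)) summable_on UNIV"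
      by (rule maj_le) simp
    fix a t :: real
    assume at: "\<bar>a\<bar> \<le> r" "\<bar>t\<bar> \<le> r"
    from has_sum_Diff[OF has_double_series_has_sum[OF F at] sum_S[OF at] subset_UNIV]
    show "((\<lambda>n. (a ^ fst n * t ^ snd n) *\<^sub>R (if n \<in> S then 0 else c n)) has_sum
        F a t - (\<Sum>\<^sub>\<infinity>n\<in>S. (a ^ fst n * t ^ snd n) *\<^sub>R c n)) UNIV"
      by (rule has_sum_cong_neutral[THEN iffD1, rotated -1]) auto
  qed
qed

lemma double_series_norm_mono:
  assumes "has_double_series r c F" "has_double_series r c' G" "\<And>n. norm (c' n) \<le> norm (c n)"
  shows "double_series_norm r c' \<le> double_series_norm r c"
  unfolding double_series_norm_def using assms
  by (intro infsum_mono) (auto simp: has_double_series_def intro: mult_right_mono)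

lemma t_coeff_column:
  "(\<Sum>\<^sub>\<infinity>n\<in>{n. snd n = p}. (a ^ fst n * t ^ snd n) *\<^sub>R c n) = t ^ p *\<^sub>R t_coeff c p a"
proof -
  have column: "{n. snd n = p} = range (\<lambda>i. (i, p))" by auto
  have "(\<Sum>\<^sub>\<infinity>n\<in>{n. snd n = p}. (a ^ fst n * t ^ snd n) *\<^sub>R c n) = (\<Sum>\<^sub>\<infinity>i. (a ^ i * t ^ p) *\<^sub>R c (i, p))"
    unfolding column by (subst infsum_reindex) (auto simp: inj_on_def o_def)
  also have "\<dots> = (\<Sum>\<^sub>\<infinity>i. t ^ p *\<^sub>R (a ^ i *\<^sub>R c (i, p)))"
    by (simp add: mult.commute)
  also have "\<dots> = t ^ p *\<^sub>R t_coeff c p a"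
    unfolding t_coeff_def by (rule infsum_scaleR_right)
  finally show ?thesis .
qed

lemma has_double_series_leading_term:
  fixes c :: "nat \<times> nat \<Rightarrow> 'a::banach"
  assumes F: "has_double_series r c F" and vanish: "coeffs_vanish_below c q p"
    and a: "\<bar>a\<bar> \<le> r"
  shows "norm (t_coeff c p a) \<le> \<bar>a\<bar> ^ q / r ^ (q + p) * double_series_norm r c"
    and "\<bar>t\<bar> \<le> r \<Longrightarrow> norm (F a t - t ^ p *\<^sub>R t_coeff c p a)
           \<le> \<bar>a\<bar> ^ q * \<bar>t\<bar> ^ Suc p / r ^ (q + Suc p) * double_series_norm r c"
proof -
  have r: "0 < r" using F by (rule has_double_series_pos)
  note column = has_double_series_restrict(1)[OF F, of "{n. snd n = p}",
      unfolded t_coeff_column mem_Collect_eq]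
  note rest = has_double_series_restrict(2)[OF F, of "{n. snd n = p}",
      unfolded t_coeff_column mem_Collect_eq]
  \<comment> \<open>The \<open>t\<^sup>p\<close>-column of the series, evaluated at \<open>t = r\<close>.\<close>
  have "norm (r ^ p *\<^sub>R t_coeff c p a)
      \<le> \<bar>a\<bar> ^ q * \<bar>r\<bar> ^ p / r ^ (q + p) * double_series_norm r (\<lambda>n. if snd n = p then c n else 0)"
    by (rule has_double_series_norm_le_monomial[OF column _ a])
       (use vanish r in \<open>auto simp: coeffs_vanish_below_def split: if_splits\<close>)
  also have "\<dots> = \<bar>a\<bar> ^ q * r ^ p / r ^ (q + p) * double_series_norm r (\<lambda>n. if snd n = p then c n else 0)"
    using r by simp
  also have "\<dots> \<le> \<bar>a\<bar> ^ q * r ^ p / r ^ (q + p) * double_series_norm r c"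
    by (rule mult_left_mono[OF double_series_norm_mono[OF F column]]) (use r in auto)
  finally show "norm (t_coeff c p a) \<le> \<bar>a\<bar> ^ q / r ^ (q + p) * double_series_norm r c"
    using r by (simp add: mult.commute divide_simps)
  show "norm (F a t - t ^ p *\<^sub>R t_coeff c p a)
      \<le> \<bar>a\<bar> ^ q * \<bar>t\<bar> ^ Suc p / r ^ (q + Suc p) * double_series_norm r c"
    if t: "\<bar>t\<bar> \<le> r"
  proof -
    have "norm (F a t - t ^ p *\<^sub>R t_coeff c p a)
      \<le> \<bar>a\<bar> ^ q * \<bar>t\<bar> ^ Suc p / r ^ (q + Suc p) * double_series_norm r (\<lambda>n. if snd n = p then 0 else c n)"
      by (rule has_double_series_norm_le_monomial[OF rest _ a t])
         (use vanish in \<open>fastforce simp: coeffs_vanish_below_def Suc_le_eq split: if_splits\<close>)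
    also have "\<dots> \<le> \<bar>a\<bar> ^ q * \<bar>t\<bar> ^ Suc p / r ^ (q + Suc p) * double_series_norm r c"
      by (rule mult_left_mono[OF double_series_norm_mono[OF F rest]]) (use r in auto)
    finally show ?thesis .
  qed
qed

lemma has_double_series_leading_bounds:
  fixes c :: "nat \<times> nat \<Rightarrow> 'a::banach"
  assumes F: "has_double_series r c F" and vanish: "coeffs_vanish_below c q p"
    and K: "double_series_norm r c / r ^ (q + p) \<le> K" "double_series_norm r c / r ^ (q + Suc p) \<le> K"
    and a: "\<bar>a\<bar> \<le> r"
  shows "norm (t_coeff c p a) \<le> K * \<bar>a\<bar> ^ q"
    and "\<bar>t\<bar> \<le> r \<Longrightarrow> norm (F a t) \<le> K * (\<bar>a\<bar> ^ q * \<bar>t\<bar> ^ p)"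
    and "\<bar>t\<bar> \<le> r \<Longrightarrow> norm (F a t - t ^ p *\<^sub>R t_coeff c p a) \<le> K * (\<bar>a\<bar> ^ q * \<bar>t\<bar> ^ Suc p)"
proof -
  have scale: "x \<le> K * w"
    if "x \<le> w / r ^ k * double_series_norm r c" "double_series_norm r c / r ^ k \<le> K" "0 \<le> w" for x w k
  proof -
    have "w / r ^ k * double_series_norm r c = double_series_norm r c / r ^ k * w" by simp
    also have "\<dots> \<le> K * w" using that(2,3) by (rule mult_right_mono)
    finally show ?thesis using that(1) by linarith
  qed
  show "norm (t_coeff c p a) \<le> K * \<bar>a\<bar> ^ q"
    using has_double_series_leading_term(1)[OF F vanish a] K(1) zero_le_power[OF abs_ge_zero]
    by (rule scale)
  show "norm (F a t) \<le> K * (\<bar>a\<bar> ^ q * \<bar>t\<bar> ^ p)" if "\<bar>t\<bar> \<le> r"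
    using has_double_series_norm_le_monomial[OF F vanish a that] K(1)
      mult_nonneg_nonneg[OF zero_le_power[OF abs_ge_zero] zero_le_power[OF abs_ge_zero]]
    by (rule scale)
  show "norm (F a t - t ^ p *\<^sub>R t_coeff c p a) \<le> K * (\<bar>a\<bar> ^ q * \<bar>t\<bar> ^ Suc p)" if "\<bar>t\<bar> \<le> r"
    using has_double_series_leading_term(2)[OF F vanish a that] K(2)
      mult_nonneg_nonneg[OF zero_le_power[OF abs_ge_zero] zero_le_power[OF abs_ge_zero]]
    by (rule scale)
qed

lemma coeffs_vanish_below_int0_coeffs:
  assumes "coeffs_vanish_below c q p"
  shows "coeffs_vanish_below (int0_coeffs c) q (Suc p)"
  unfolding coeffs_vanish_below_def
proof (intro allI impI)
  fix n
  assume "int0_coeffs c n \<noteq> 0"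
  then have "snd n \<noteq> 0" "c (fst n, snd n - 1) \<noteq> 0"
    by (auto simp: int0_coeffs_def split: if_splits)
  then show "q \<le> fst n \<and> Suc p \<le> snd n"
    using assms[unfolded coeffs_vanish_below_def, rule_format, of "(fst n, snd n - 1)"] by auto
qed

lemma t_coeff_int0_coeffs: "t_coeff (int0_coeffs c) (Suc p) a = t_coeff c p a /\<^sub>R real (Suc p)"
  by (simp add: t_coeff_def int0_coeffs_def scaleR_scaleR mult.commute flip: infsum_scaleR_right)

lemma has_double_series_int0_leading_bounds:
  fixes c :: "nat \<times> nat \<Rightarrow> 'a::banach"
  assumes B: "has_double_series r c B" and vanish: "coeffs_vanish_below c q p"
    and K: "double_series_norm r (int0_coeffs c) / r ^ (q + Suc p) \<le> K"
      "double_series_norm r (int0_coeffs c) / r ^ (q + Suc (Suc p)) \<le> K"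
    and a: "\<bar>a\<bar> \<le> r" and t: "\<bar>t\<bar> \<le> r"
  shows "norm (int0 (B a) t) \<le> K * (\<bar>a\<bar> ^ q * \<bar>t\<bar> ^ Suc p)"
    and "norm (int0 (B a) t - (t ^ Suc p / real (Suc p)) *\<^sub>R t_coeff c p a)
           \<le> K * (\<bar>a\<bar> ^ q * \<bar>t\<bar> ^ Suc p) * \<bar>t\<bar>"
proof -
  note bounds = has_double_series_leading_bounds[OF has_double_series_int0(1)[OF B]
      coeffs_vanish_below_int0_coeffs[OF vanish] K a]
  show "norm (int0 (B a) t) \<le> K * (\<bar>a\<bar> ^ q * \<bar>t\<bar> ^ Suc p)"
    by (rule bounds(2)[OF t])
  have "t ^ Suc p *\<^sub>R t_coeff (int0_coeffs c) (Suc p) a = (t ^ Suc p / real (Suc p)) *\<^sub>R t_coeff c p a"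
    by (simp add: t_coeff_int0_coeffs divide_inverse del: power_Suc of_nat_Suc)
  with bounds(3)[OF t] show "norm (int0 (B a) t - (t ^ Suc p / real (Suc p)) *\<^sub>R t_coeff c p a)
      \<le> K * (\<bar>a\<bar> ^ q * \<bar>t\<bar> ^ Suc p) * \<bar>t\<bar>"
    by (simp add: mult_ac)
qed

section \<open>The Magnus step\<close>

lemma norm_ad_le:
  fixes x y :: "'a::real_normed_algebra"
  shows "norm (ad x y) \<le> 2 * norm x * norm y"
proof -
  have "norm (ad x y) \<le> norm (x * y) + norm (y * x)"
    unfolding ad_def by (rule norm_triangle_ineq4)
  also have "\<dots> \<le> norm x * norm y + norm y * norm x"
    by (intro add_mono norm_mult_ineq)
  finally show ?thesis by simp
qed

lemma norm_ad_power_le: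
  fixes x y :: "'a::real_normed_algebra"
  shows "norm ((ad x ^^ n) y) \<le> (2 * norm x) ^ n * norm y"
proof (induction n)
  case 0
  then show ?case by simp
next
  case (Suc n)
  have "norm ((ad x ^^ Suc n) y) \<le> 2 * norm x * norm ((ad x ^^ n) y)"
    by (simp add: norm_ad_le)
  also have "\<dots> \<le> 2 * norm x * ((2 * norm x) ^ n * norm y)"
    by (rule mult_left_mono[OF Suc.IH]) simp
  finally show ?case by (simp add: mult_ac)
qed

lemma norm_magnus_term_le:
  fixes X Y :: "'a::real_normed_algebra"
  shows "norm (magnus_coeff j *\<^sub>R (ad X ^^ Suc j) Y) \<le> (2 * norm X) ^ Suc j * norm Y"
proof -
  have "inverse (fact j :: real) \<le> 1"
    using fact_ge_1[of j, where 'a = real] by (simp add: inverse_le_1_iff)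
  with abs_magnus_coeff_le[of j] have "\<bar>magnus_coeff j\<bar> \<le> 1"
    by linarith
  then have "norm (magnus_coeff j *\<^sub>R (ad X ^^ Suc j) Y) \<le> 1 * ((2 * norm X) ^ Suc j * norm Y)"
    unfolding norm_scaleR by (intro mult_mono norm_ad_power_le) auto
  then show ?thesis by simp
qed

lemma norm_magnus_series_le:
  fixes X Y :: "'a::{real_normed_algebra,banach}"
  assumes X: "norm X \<le> 1 / 4"
  shows "norm (\<Sum>j. magnus_coeff j *\<^sub>R (ad X ^^ Suc j) Y)
           \<le> norm (ad X Y) / 2 + 8 * norm X ^ 2 * norm Y"
proof -
  define f where "f j = magnus_coeff j *\<^sub>R (ad X ^^ Suc j) Y" for j
  define x where "x = 2 * norm X"
  have x: "0 \<le> x" "x \<le> 1 / 2" using X by (auto simp: x_def)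
  have f_le: "norm (f j) \<le> x ^ Suc j * norm Y" for j
    unfolding f_def x_def by (rule norm_magnus_term_le)
  have f_le': "norm (f (Suc j)) \<le> x ^ 2 * norm Y * x ^ j" for j
  proof -
    have "x ^ Suc (Suc j) * norm Y = x ^ 2 * norm Y * x ^ j"
      by (simp add: power2_eq_square mult_ac)
    with f_le[of "Suc j"] show ?thesis by linarith
  qed
  have geometric: "summable (\<lambda>j. x ^ 2 * norm Y * x ^ j)"
    using x by (intro summable_mult summable_geometric) auto
  have tail: "summable (\<lambda>j. norm (f (Suc j)))"
    by (rule summable_comparison_test'[OF geometric]) (simp add: f_le')
  have "norm (\<Sum>j. f (Suc j)) \<le> (\<Sum>j. x ^ 2 * norm Y * x ^ j)"
    by (intro order_trans[OF summable_norm[OF tail] suminf_le[OF _ tail geometric]]) (simp add: f_le')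
  also have "\<dots> = x ^ 2 * norm Y * (1 / (1 - x))"
    using x by (simp add: suminf_mult suminf_geometric)
  also have "\<dots> \<le> x ^ 2 * norm Y * 2"
    using x by (intro mult_left_mono) (simp_all add: divide_le_eq)
  also have "\<dots> = 8 * norm X ^ 2 * norm Y"
    by (simp add: x_def power2_eq_square)
  finally have tail_le: "norm (\<Sum>j. f (Suc j)) \<le> 8 * norm X ^ 2 * norm Y" .
  have "summable f"
    using summable_norm_cancel[OF tail] by (simp only: summable_Suc_iff)
  then have "suminf f = f 0 + (\<Sum>j. f (Suc j))"
    by (simp add: suminf_split_head)
  moreover have "f 0 = (- 1 / 2) *\<^sub>R ad X Y"
    by (simp add: f_def magnus_coeff_def)
  ultimately have "norm (suminf f) \<le> norm (ad X Y) / 2 + 8 * norm X ^ 2 * norm Y"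
    using norm_triangle_ineq[of "f 0" "\<Sum>j. f (Suc j)"] tail_le by simp
  then show ?thesis
    by (simp only: f_def[abs_def])
qed

text \<open>The leading parts of \<open>X\<close> and \<open>Y\<close> are multiples of the same element \<open>D\<close>, so they commute.\<close>
lemma norm_ad_common_leading_part_le:
  fixes D X1 Y1 :: "'a::real_normed_algebra"
  shows "norm (ad (\<tau> *\<^sub>R D + X1) (\<sigma> *\<^sub>R D + Y1))
           \<le> 2 * \<bar>\<tau>\<bar> * norm D * norm Y1 + 2 * norm X1 * norm (\<sigma> *\<^sub>R D + Y1)"
proof -
  have "ad (\<tau> *\<^sub>R D + X1) (\<sigma> *\<^sub>R D + Y1) = ad (\<tau> *\<^sub>R D) Y1 + ad X1 (\<sigma> *\<^sub>R D + Y1)"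
    by (simp add: ad_def algebra_simps)
  then have "norm (ad (\<tau> *\<^sub>R D + X1) (\<sigma> *\<^sub>R D + Y1))
      \<le> norm (ad (\<tau> *\<^sub>R D) Y1) + norm (ad X1 (\<sigma> *\<^sub>R D + Y1))"
    by (simp add: norm_triangle_ineq)
  also have "\<dots> \<le> 2 * norm (\<tau> *\<^sub>R D) * norm Y1 + 2 * norm X1 * norm (\<sigma> *\<^sub>R D + Y1)"
    by (intro add_mono norm_ad_le)
  finally show ?thesis by simp
qed

lemma norm_ad_le_monomial:
  fixes D X Y :: "'a::real_normed_algebra"
  assumes A: "0 \<le> A" and T: "0 \<le> T" and K: "0 \<le> K"
    and \<tau>: "\<bar>\<tau>\<bar> \<le> T ^ Suc p"
    and D: "norm D \<le> K * A ^ q"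
    and Y: "norm Y \<le> K * (A ^ q * T ^ p)"
    and Y1: "norm (Y - \<sigma> *\<^sub>R D) \<le> K * (A ^ q * T ^ Suc p)"
    and X1: "norm (X - \<tau> *\<^sub>R D) \<le> K * (A ^ q * T ^ Suc p) * T"
  shows "norm (ad X Y) \<le> 4 * K ^ 2 * (A ^ q * T ^ Suc p) ^ 2"
proof -
  define m where "m = A ^ q * T ^ Suc p"
  have "norm (ad X Y) / 2 \<le> \<bar>\<tau>\<bar> * norm D * norm (Y - \<sigma> *\<^sub>R D) + norm (X - \<tau> *\<^sub>R D) * norm Y"
    using norm_ad_common_leading_part_le[of \<tau> D "X - \<tau> *\<^sub>R D" \<sigma> "Y - \<sigma> *\<^sub>R D"] by simp
  also have "\<dots> \<le> T ^ Suc p * (K * A ^ q) * (K * m) + K * m * T * (K * (A ^ q * T ^ p))"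
  proof (rule add_mono)
    show "\<bar>\<tau>\<bar> * norm D * norm (Y - \<sigma> *\<^sub>R D) \<le> T ^ Suc p * (K * A ^ q) * (K * m)"
      unfolding m_def by (intro mult_mono \<tau> D Y1) (use K A T in auto)
    show "norm (X - \<tau> *\<^sub>R D) * norm Y \<le> K * m * T * (K * (A ^ q * T ^ p))"
      unfolding m_def by (intro mult_mono X1 Y) (use K A T in auto)
  qed
  also have "\<dots> = 2 * K ^ 2 * m ^ 2"
    by (simp add: m_def power2_eq_square mult_ac)
  finally show ?thesis
    by (simp add: m_def)
qed

lemma norm_magnus_series_le_monomial:
  fixes D X Y :: "'a::{real_normed_algebra,banach}"
  assumes A: "0 \<le> A" "A \<le> 1" and T: "0 \<le> T" "T \<le> 1" and K: "0 \<le> K" "T \<le> 1 / (4 * K + 1)"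
    and \<tau>: "\<bar>\<tau>\<bar> \<le> T ^ Suc p"
    and D: "norm D \<le> K * A ^ q"
    and Y: "norm Y \<le> K * (A ^ q * T ^ p)"
    and Y1: "norm (Y - \<sigma> *\<^sub>R D) \<le> K * (A ^ q * T ^ Suc p)"
    and X: "norm X \<le> K * (A ^ q * T ^ Suc p)"
    and X1: "norm (X - \<tau> *\<^sub>R D) \<le> K * (A ^ q * T ^ Suc p) * T"
  shows "norm (\<Sum>j. magnus_coeff j *\<^sub>R (ad X ^^ Suc j) Y)
           \<le> (2 * K ^ 2 + 8 * K ^ 3) * (A ^ (2 * q) * T ^ (2 * p + 2))"
proof -
  define m where "m = A ^ q * T ^ Suc p"
  have AT: "A ^ q * T ^ p \<le> 1"
    using A T by (simp add: mult_le_one power_le_one)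
  then have Y_le: "norm Y \<le> K"
    using Y mult_left_mono[of "A ^ q * T ^ p" 1 K] K by simp
  have "K * T \<le> K * (1 / (4 * K + 1))"
    by (rule mult_left_mono[OF K(2) K(1)])
  also have "\<dots> \<le> 1 / 4"
    using K by (simp add: field_simps)
  finally have KT: "K * T \<le> 1 / 4" .
  have "m \<le> T"
    using mult_left_mono[OF AT T(1)] by (simp add: m_def mult_ac)
  then have X_small: "norm X \<le> 1 / 4"
    using X mult_left_mono[OF \<open>m \<le> T\<close> K(1)] KT unfolding m_def by linarith
  have "norm (ad X Y) / 2 \<le> 2 * K ^ 2 * m ^ 2"
    using norm_ad_le_monomial[OF A(1) T(1) K(1) \<tau> D Y Y1 X1] by (simp add: m_def)
  moreover have "8 * norm X ^ 2 * norm Y \<le> 8 * (K * m) ^ 2 * K"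
    using X Y_le unfolding m_def by (intro mult_mono power_mono) auto
  ultimately have "norm (ad X Y) / 2 + 8 * norm X ^ 2 * norm Y \<le> (2 * K ^ 2 + 8 * K ^ 3) * m ^ 2"
    by (simp add: algebra_simps power2_eq_square power3_eq_cube)
  also have "m ^ 2 = A ^ (q * 2) * T ^ (Suc p * 2)"
    by (simp only: m_def power_mult_distrib power_mult)
  also have "\<dots> = A ^ (2 * q) * T ^ (2 * p + 2)"
    by (rule arg_cong2[where f = "\<lambda>i j. A ^ i * T ^ j"]) simp_all
  finally show ?thesis
    by (rule order_trans[OF norm_magnus_series_le[OF X_small]])
qed

lemma abs_power_Suc_divide_le: "\<bar>t ^ Suc p / real (Suc p)\<bar> \<le> \<bar>t\<bar> ^ Suc p"
proof -
  have "\<bar>t ^ Suc p / real (Suc p)\<bar> = \<bar>t\<bar> ^ Suc p / real (Suc p)"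
    by (simp add: abs_divide power_abs del: power_Suc of_nat_Suc)
  also have "\<dots> \<le> \<bar>t\<bar> ^ Suc p / 1"
    by (rule divide_left_mono) auto
  finally show ?thesis by simp
qed

lemma magnus_step_bigO:
  fixes B :: "real \<Rightarrow> real \<Rightarrow> 'a::{real_normed_algebra,banach}"
  assumes B: "has_double_series r c B" and vanish: "coeffs_vanish_below c q p"
  shows "bigO_at0 (\<lambda>a t. magnus_step (B a) t) (2 * q) (2 * p + 2)"
proof -
  have r: "0 < r" using B by (rule has_double_series_pos)
  note X = has_double_series_int0(1)[OF B]
  define N where "N = double_series_norm r c"
  define NX where "NX = double_series_norm r (int0_coeffs c)"
  define K where "K = max (max (N / r ^ (q + p)) (N / r ^ (q + Suc p)))
                          (max (NX / r ^ (q + Suc p)) (NX / r ^ (q + Suc (Suc p))))"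
  have K_ge: "N / r ^ (q + p) \<le> K" "N / r ^ (q + Suc p) \<le> K"
    "NX / r ^ (q + Suc p) \<le> K" "NX / r ^ (q + Suc (Suc p)) \<le> K"
    by (simp_all add: K_def)
  have "0 \<le> N / r ^ (q + p)"
    using double_series_norm_nonneg[OF B] r by (simp add: N_def)
  with K_ge(1) have K: "0 \<le> K" by linarith
  note bounds_B = has_double_series_leading_bounds[OF B vanish K_ge(1,2)[unfolded N_def]]
  note bounds_X = has_double_series_int0_leading_bounds[OF B vanish K_ge(3,4)[unfolded NX_def]]
  define \<epsilon> where "\<epsilon> = min (min r 1) (1 / (4 * K + 1))"
  have \<epsilon>: "0 < \<epsilon>" using r K by (simp add: \<epsilon>_def)
  have bound: "norm (magnus_step (B a) t) \<le> (2 * K ^ 2 + 8 * K ^ 3) * \<bar>a\<bar> ^ (2 * q) * \<bar>t\<bar> ^ (2 * p + 2)"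
    if "\<bar>a\<bar> < \<epsilon>" "\<bar>t\<bar> < \<epsilon>" for a t
  proof -
    have a: "\<bar>a\<bar> \<le> r" "\<bar>a\<bar> \<le> 1" and t: "\<bar>t\<bar> \<le> r" "\<bar>t\<bar> \<le> 1" "\<bar>t\<bar> \<le> 1 / (4 * K + 1)"
      using that by (auto simp: \<epsilon>_def)
    from norm_magnus_series_le_monomial[OF abs_ge_zero a(2) abs_ge_zero t(2) K t(3) abs_power_Suc_divide_le
        bounds_B(1)[OF a(1)] bounds_B(2,3)[OF a(1) t(1)] bounds_X[OF a(1) t(1)]]
    show ?thesis
      unfolding magnus_step_eq by (simp add: mult.assoc)
  qed
  show ?thesis
    unfolding bigO_at0_iff
    by (intro exI[of _ "2 * K ^ 2 + 8 * K ^ 3"] exI[of _ \<epsilon>] conjI \<epsilon> allI impI bound)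
qed

theorem lemma2:
  fixes A0 :: "real \<Rightarrow> 'a::{real_normed_algebra,banach}"
    and k q p :: nat
  assumes findim: "\<exists>B::'a set. finite B \<and> span B = UNIV"
    and analytic: "real_analytic A0"
    and hyp: "bigO_at0 (\<lambda>\<alpha> t. alphaA A0 \<alpha> k t) q p"
  shows "bigO_at0 (\<lambda>\<alpha> t. alphaA A0 \<alpha> (Suc k) t) (2 * q) (2 * p + 2)"
proof -
  \<comment> \<open>The argument works in every Banach algebra.\<close>
  obtain r c where c: "has_double_series r c (\<lambda>\<alpha> t. alphaA A0 \<alpha> k t)"
    using double_series_bound_alphaA[OF analytic] unfolding double_series_bound_def by blast
  from magnus_step_bigO[OF c has_double_series_coeffs_vanish_below[OF c hyp]] show ?thesis
    by simp
qed

end
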